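(* Let $G$ be a circle intersection graph (with at least one vertex). Then $G$ has a vertex $v$ such that the subgraph of $G$ induced on $\{v\}\cup N(v)$ does not contain an induced subgraph isomorphic to $K_{1,6}$.
   Context: A graph $G$ is a circle intersection graph if its vertices can be put in one-to-one correspondence with closed disks (circles) of arbitrary positive radii in the plane so that two vertices are adjacent if and only if the corresponding disks intersect (tangent circles are considered to intersect). $N(v)$ is the set of neighbors of $v$; $K_{1,6}$ is the star with $6$ leaves. *)

theory Defs
  imports "HOL-Analysis.Analysis"
begin

definition simple_graph :: "'a set \<Rightarrow> ('a \<Rightarrow> 'a \<Rightarrow> bool) \<Rightarrow> bool" where
  "simple_graph V E \<longleftrightarrow>
     (\<forall>u\<in>V. \<forall>v\<in>V. E u v \<longleftrightarrow> E v u) \<and> (\<forall>v\<in>V. \<not> E v v)"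

definition circle_intersection_graph :: "'a set \<Rightarrow> ('a \<Rightarrow> 'a \<Rightarrow> bool) \<Rightarrow> bool" where
  "circle_intersection_graph V E \<longleftrightarrow>
     (\<exists>(c :: 'a \<Rightarrow> real^2) (r :: 'a \<Rightarrow> real).
        (\<forall>v\<in>V. r v > 0) \<and>
        inj_on (\<lambda>v. cball (c v) (r v)) V \<and>
        (\<forall>u\<in>V. \<forall>v\<in>V. u \<noteq> v \<longrightarrow>
            (E u v \<longleftrightarrow> cball (c u) (r u) \<inter> cball (c v) (r v) \<noteq> {})))"

definition nbhd :: "'a set \<Rightarrow> ('a \<Rightarrow> 'a \<Rightarrow> bool) \<Rightarrow> 'a \<Rightarrow> 'a set" where
  "nbhd V E v = {u \<in> V. u \<noteq> v \<and> E v u}"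

definition has_induced_K16 :: "'a set \<Rightarrow> ('a \<Rightarrow> 'a \<Rightarrow> bool) \<Rightarrow> bool" where
  "has_induced_K16 S E \<longleftrightarrow>
     (\<exists>x L. x \<in> S \<and> L \<subseteq> S \<and> x \<notin> L \<and> card L = 6 \<and>
        (\<forall>y\<in>L. E x y) \<and> (\<forall>y\<in>L. \<forall>z\<in>L. y \<noteq> z \<longrightarrow> \<not> E y z))"

end

theory Submission
  imports Defs
begin

(* Take v with a disk of minimal radius \<rho> and suppose six pairwise non-adjacent neighbours of v
   (the leaves of a K_{1,6} in the closed neighbourhood of v are such vertices).
   Each of their disks has radius at least \<rho> and meets the disk of v, so it contains a smaller
   disk of radius (its radius - \<rho>) whose centre p lies within 2\<rho> of the centre of v; disjointness
   of the original disks makes these six centres p pairwise more than 2\<rho> apart. Six points in a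
   closed disk of radius R that are pairwise more than R apart do not exist: seen from the
   centre, any two of them subtend an angle larger than pi/3 (law of cosines), which leaves
   room for at most five. *)

lemma cball_inter_cball_nonempty_iff:
  fixes a b :: "'v::real_normed_vector"
  assumes "0 \<le> r" "0 \<le> s"
  shows "cball a r \<inter> cball b s \<noteq> {} \<longleftrightarrow> dist a b \<le> r + s"
proof
  assume "cball a r \<inter> cball b s \<noteq> {}"
  then show "dist a b \<le> r + s"
    using disjoint_cballI by force
next
  assume ab: "dist a b \<le> r + s"
  show "cball a r \<inter> cball b s \<noteq> {}"
  proof (cases "dist a b \<le> r")
    case True
    then have "b \<in> cball a r \<inter> cball b s"
      using assms(2) by simp
    then show ?thesis
      by blast
  next
    case False
    define d where "d = dist a b"
    have "d > 0" "r < d"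
      using False assms by (auto simp: d_def)
    define q where "q = a + (r / d) *\<^sub>R (b - a)"
    have "dist a q = r"
      using \<open>d > 0\<close> assms by (simp add: q_def dist_norm d_def norm_minus_commute)
    moreover have "b - q = (1 - r / d) *\<^sub>R (b - a)"
      by (simp add: q_def algebra_simps)
    then have "dist b q = (1 - r / d) * d"
      using \<open>r < d\<close> \<open>d > 0\<close> by (simp add: dist_norm d_def norm_minus_commute)
    ultimately have "q \<in> cball a r" "q \<in> cball b s"
      using \<open>d > 0\<close> ab by (auto simp: d_def field_simps)
    then show ?thesis
      by blast
  qed
qed

lemma cmod_diff_power2_Arg2pi:
  "(cmod (z - w))\<^sup>2 = (cmod z)\<^sup>2 + (cmod w)\<^sup>2 - 2 * cmod z * cmod w * cos (Arg2pi z - Arg2pi w)"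
proof -
  have "cmod z * cmod w * cos (Arg2pi z - Arg2pi w)
      = (cmod z * cos (Arg2pi z)) * (cmod w * cos (Arg2pi w))
        + (cmod z * sin (Arg2pi z)) * (cmod w * sin (Arg2pi w))"
    by (simp add: cos_diff algebra_simps)
  also have "\<dots> = Re z * Re w + Im z * Im w"
    by (simp only: cos_Arg2pi sin_Arg2pi)
  moreover have "(cmod (z - w))\<^sup>2 = (cmod z)\<^sup>2 + (cmod w)\<^sup>2 - 2 * (Re z * Re w + Im z * Im w)"
    by (simp add: cmod_power2 power2_diff)
  ultimately show ?thesis
    by simp
qed

lemma cmod_diff_le_if_cos_Arg2pi_ge_half:
  assumes "cmod z \<le> R" "cmod w \<le> R" "1/2 \<le> cos (Arg2pi z - Arg2pi w)"
  shows "cmod (z - w) \<le> R"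
proof -
  have "cmod z * cmod w \<le> 2 * cmod z * cmod w * cos (Arg2pi z - Arg2pi w)"
    using mult_left_mono[OF assms(3), of "2 * cmod z * cmod w"] by simp
  moreover have "(cmod z)\<^sup>2 + (cmod w)\<^sup>2 - cmod z * cmod w \<le> R\<^sup>2"
    using assms(1,2) norm_ge_zero[of z] norm_ge_zero[of w]
    by (smt (verit, ccfv_SIG) mult.commute mult_right_mono power2_eq_square)
  ultimately have "(cmod (z - w))\<^sup>2 \<le> R\<^sup>2"
    unfolding cmod_diff_power2_Arg2pi by linarith
  then show ?thesis
    using assms(1) norm_ge_zero[of z] by (auto intro: power2_le_imp_le)
qed

lemma pi_div_3_lt_if_cos_lt_half:
  fixes x :: real
  assumes "0 \<le> x" "x \<le> 2 * pi" "cos x < 1/2"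
  shows "pi / 3 < x \<and> x < 5 * pi / 3"
proof -
  have cos_ge_half: "1/2 \<le> cos y" if "0 \<le> y" "y \<le> pi / 3" for y
    using cos_monotone_0_pi_le[of y "pi / 3"] that by (simp add: cos_60)
  have "cos (2 * pi - x) = cos x"
    by (simp add: cos_diff)
  then show ?thesis
    using assms cos_ge_half[of x] cos_ge_half[of "2 * pi - x"] by fastforce
qed

lemma card_mult_gap_le_Max_minus_Min:
  fixes A :: "real set"
  assumes "finite A" "A \<noteq> {}" "\<And>x y. x \<in> A \<Longrightarrow> y \<in> A \<Longrightarrow> x < y \<Longrightarrow> d \<le> y - x"
  shows "(real (card A) - 1) * d \<le> Max A - Min A"
  using assms
proof (induction "card A" arbitrary: A)
  case 0
  then show ?case by simp
next
  case (Suc n)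
  show ?case
  proof (cases "n = 0")
    case True
    then have "card A = 1"
      using Suc.hyps(2) by simp
    then obtain a where "A = {a}"
      by (rule card_1_singletonE)
    then show ?thesis by simp
  next
    case False
    define B where "B = A - {Max A}"
    have "finite B" "B \<subseteq> A"
      using Suc.prems(1) by (auto simp: B_def)
    have "Max A \<in> A"
      using Suc.prems(1,2) by simp
    then have "card B = n"
      using Suc.hyps(2) Suc.prems(1) by (simp add: B_def)
    then have "B \<noteq> {}"
      using False by auto
    have IH: "(real n - 1) * d \<le> Max B - Min B"
      using Suc.hyps(1)[OF _ \<open>finite B\<close> \<open>B \<noteq> {}\<close>] Suc.prems(3) \<open>card B = n\<close> \<open>B \<subseteq> A\<close> by blast
    have "Max B \<in> B"
      using \<open>finite B\<close> \<open>B \<noteq> {}\<close> by simp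
    then have "Max B \<in> A" "Max B < Max A"
      using Suc.prems(1) by (auto simp: B_def order_le_neq_trans)
    then have gap: "d \<le> Max A - Max B"
      using Suc.prems(3) \<open>Max A \<in> A\<close> by blast
    have "Min A \<le> Max B"
      using \<open>Max B \<in> A\<close> Suc.prems(1) by simp
    then have "Min A \<in> B"
      using \<open>Max B < Max A\<close> Suc.prems(1,2) by (simp add: B_def)
    then have "Min B = Min A"
      using Min_antimono[OF \<open>B \<subseteq> A\<close> \<open>B \<noteq> {}\<close> Suc.prems(1)] \<open>finite B\<close> by (simp add: antisym)
    then show ?thesis
      using IH gap Suc.hyps(2)[symmetric] by (simp add: algebra_simps)
  qed
qed

lemma card_le_5_if_pairwise_far_complex:
  fixes P :: "complex set"
  assumes "finite P" "P \<subseteq> cball 0 R" "\<forall>z\<in>P. \<forall>w\<in>P. z \<noteq> w \<longrightarrow> R < dist z w"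
  shows "card P \<le> 5"
proof -
  have cos_lt: "cos (Arg2pi z - Arg2pi w) < 1/2" if "z \<in> P" "w \<in> P" "z \<noteq> w" for z w
    using cmod_diff_le_if_cos_Arg2pi_ge_half[of z R w] assms(2,3) that
    by (force simp: dist_norm subset_iff)
  have "inj_on Arg2pi P"
    by (rule inj_onI) (use cos_lt in fastforce)
  define A where "A = Arg2pi ` P"
  have "finite A" and card_A: "card A = card P"
    using assms(1) card_image[OF \<open>inj_on Arg2pi P\<close>] by (simp_all add: A_def)
  \<comment> \<open>The upper bound is the gap that wraps around through angle 0 = 2 pi.\<close>
  have gaps: "pi / 3 < y - x \<and> y - x < 5 * pi / 3" if xy: "x \<in> A" "y \<in> A" "x < y" for x y
  proof -
    obtain z w where "z \<in> P" "w \<in> P" "x = Arg2pi z" "y = Arg2pi w"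
      using xy(1,2) by (auto simp: A_def)
    then have "cos (y - x) < 1/2"
      using cos_lt[of w z] xy(3) by auto
    moreover have "y - x \<le> 2 * pi"
      using Arg2pi_ge_0[of z] Arg2pi_lt_2pi[of w] \<open>x = Arg2pi z\<close> \<open>y = Arg2pi w\<close> by linarith
    ultimately show ?thesis
      using pi_div_3_lt_if_cos_lt_half[of "y - x"] xy(3) by simp
  qed
  show ?thesis
  proof (cases "card A \<le> 1")
    case True
    then show ?thesis using card_A by simp
  next
    case False
    then obtain x y where "x \<in> A" "y \<in> A" "x < y"
      using \<open>finite A\<close> card_le_Suc0_iff_eq[of A] by (auto simp: neq_iff)
    then have "A \<noteq> {}" "Min A < Max A"
      using Min_le[OF \<open>finite A\<close> \<open>x \<in> A\<close>] Max_ge[OF \<open>finite A\<close> \<open>y \<in> A\<close>] by auto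
    then have "Max A - Min A < 5 * pi / 3"
      using gaps Min_in Max_in \<open>finite A\<close> by blast
    moreover have "(real (card A) - 1) * (pi / 3) \<le> Max A - Min A"
      using gaps by (intro card_mult_gap_le_Max_minus_Min[OF \<open>finite A\<close> \<open>A \<noteq> {}\<close>]) force
    ultimately have "(real (card A) - 1) * (pi / 3) < 5 * (pi / 3)"
      by linarith
    then have "real (card A) - 1 < 5"
      by (simp add: mult_less_cancel_right)
    then show ?thesis
      using card_A by linarith
  qed
qed

lemma card_le_5_if_pairwise_far:
  fixes P :: "(real^2) set"
  assumes "finite P" "P \<subseteq> cball a R" "\<forall>x\<in>P. \<forall>y\<in>P. x \<noteq> y \<longrightarrow> R < dist x y"
  shows "card P \<le> 5"
proof -
  define f where "f x = Complex ((x - a)$1) ((x - a)$2)" for x :: "real^2"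
  have norm_f: "cmod (f x) = norm (x - a)" for x
    by (simp add: f_def norm_vec_def L2_set_def sum_2 norm_complex_def)
  have dist_f: "dist (f x) (f y) = dist x y" for x y
    using norm_f[of "x - y + a"] by (simp add: f_def dist_norm complex_diff)
  have "inj_on f P"
    by (rule inj_onI) (metis dist_f dist_eq_0_iff)
  moreover have "card (f ` P) \<le> 5"
  proof (rule card_le_5_if_pairwise_far_complex)
    show "finite (f ` P)"
      using assms(1) by simp
    show "f ` P \<subseteq> cball 0 R"
      using assms(2) by (auto simp: norm_f dist_norm norm_minus_commute)
    show "\<forall>z\<in>f ` P. \<forall>w\<in>f ` P. z \<noteq> w \<longrightarrow> R < dist z w"
      using assms(3) by (auto simp: dist_f)
  qed
  ultimately show ?thesis
    by (simp add: card_image)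
qed

lemma card_le_5_disjoint_cballs_meeting_cball:
  fixes c :: "'i \<Rightarrow> real^2"
  assumes "finite L" "0 \<le> \<rho>" "\<forall>u\<in>L. \<rho> \<le> r u"
    and meet: "\<forall>u\<in>L. cball a \<rho> \<inter> cball (c u) (r u) \<noteq> {}"
    and disj: "disjoint_family_on (\<lambda>u. cball (c u) (r u)) L"
  shows "card L \<le> 5"
proof -
  have "\<exists>q. q \<in> cball (c u) (r u - \<rho>) \<inter> cball a (2 * \<rho>)" if "u \<in> L" for u
  proof -
    have "dist (c u) a \<le> (r u - \<rho>) + 2 * \<rho>"
      using meet that disjoint_cballI[of \<rho> "r u" a "c u"] by (force simp: dist_commute)
    moreover have "\<rho> \<le> r u"
      using assms(3) that by blast
    ultimately have "cball (c u) (r u - \<rho>) \<inter> cball a (2 * \<rho>) \<noteq> {}"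
      using cball_inter_cball_nonempty_iff[of "r u - \<rho>" "2 * \<rho>" "c u" a] assms(2) by simp
    then show ?thesis
      by blast
  qed
  then obtain p where p: "\<And>u. u \<in> L \<Longrightarrow> p u \<in> cball (c u) (r u - \<rho>) \<inter> cball a (2 * \<rho>)"
    by metis
  have far: "2 * \<rho> < dist (p y) (p z)" if "y \<in> L" "z \<in> L" "y \<noteq> z" for y z
  proof -
    have "0 \<le> r y" "0 \<le> r z"
      using assms(2,3) that(1,2) by force+
    then have "r y + r z < dist (c y) (c z)"
      using disj that cball_inter_cball_nonempty_iff[of "r y" "r z" "c y" "c z"]
      by (auto simp: disjoint_family_on_def)
    moreover have "dist (c y) (c z) \<le> dist (c y) (p y) + dist (p y) (p z) + dist (p z) (c z)"
      using dist_triangle[where x = "c y" and y = "p y" and z = "c z"]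
        dist_triangle[where x = "p y" and y = "p z" and z = "c z"] by linarith
    ultimately show ?thesis
      using p[OF that(1)] p[OF that(2)] by (simp add: dist_commute)
  qed
  have "inj_on p L"
    by (rule inj_onI) (use far assms(2) in fastforce)
  moreover have "card (p ` L) \<le> 5"
    using assms(1) p far by (intro card_le_5_if_pairwise_far[of _ a "2 * \<rho>"]) auto
  ultimately show ?thesis
    by (simp add: card_image)
qed

lemma induced_K16_in_closed_nbhd_imp_independent_nbhd:
  assumes "has_induced_K16 ({v} \<union> nbhd V E v) E"
  shows "\<exists>L \<subseteq> nbhd V E v. card L = 6 \<and> (\<forall>y\<in>L. \<forall>z\<in>L. y \<noteq> z \<longrightarrow> \<not> E y z)"
proof -
  obtain L where L: "L \<subseteq> {v} \<union> nbhd V E v" "card L = 6"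
    and indep: "\<forall>y\<in>L. \<forall>z\<in>L. y \<noteq> z \<longrightarrow> \<not> E y z"
    using assms unfolding has_induced_K16_def by meson
  have "v \<notin> L"
  proof
    assume "v \<in> L"
    moreover have "L \<noteq> {v}"
      using L(2) by auto
    ultimately obtain y where "y \<in> L" "y \<noteq> v"
      by blast
    then have "y \<in> nbhd V E v"
      using L(1) by blast
    then have "E v y"
      by (simp add: nbhd_def)
    have "\<not> E v y"
      using indep \<open>v \<in> L\<close> \<open>y \<in> L\<close> \<open>y \<noteq> v\<close> by force
    show False
      using \<open>E v y\<close> \<open>\<not> E v y\<close> by contradiction
  qed
  then have "L \<subseteq> nbhd V E v"
    using L(1) by blast
  then show ?thesis
    using L(2) indep by blast
qed

lemma card_le_5_if_independent_in_nbhd_of_smallest_disk: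
  fixes c :: "'a \<Rightarrow> real^2"
  assumes r_pos: "\<forall>v\<in>V. 0 < r v"
    and adj: "\<forall>u\<in>V. \<forall>v\<in>V. u \<noteq> v \<longrightarrow> (E u v \<longleftrightarrow> cball (c u) (r u) \<inter> cball (c v) (r v) \<noteq> {})"
    and "v \<in> V" and r_min: "\<forall>u\<in>V. r v \<le> r u"
    and "finite L" "L \<subseteq> nbhd V E v" and indep: "\<forall>y\<in>L. \<forall>z\<in>L. y \<noteq> z \<longrightarrow> \<not> E y z"
  shows "card L \<le> 5"
proof (rule card_le_5_disjoint_cballs_meeting_cball[of L "r v" r "c v" c])
  have nbhd_L: "u \<in> V \<and> u \<noteq> v \<and> E v u" if "u \<in> L" for u
    using \<open>L \<subseteq> nbhd V E v\<close> that unfolding nbhd_def by blast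
  show "finite L"
    by fact
  show "0 \<le> r v"
    using r_pos \<open>v \<in> V\<close> by fastforce
  show "\<forall>u\<in>L. r v \<le> r u"
    using nbhd_L r_min by blast
  show "\<forall>u\<in>L. cball (c v) (r v) \<inter> cball (c u) (r u) \<noteq> {}"
    using nbhd_L adj[rule_format, OF \<open>v \<in> V\<close>] by auto
  show "disjoint_family_on (\<lambda>u. cball (c u) (r u)) L"
    unfolding disjoint_family_on_def
  proof (intro ballI impI)
    fix y z
    assume "y \<in> L" "z \<in> L" "y \<noteq> z"
    then have "\<not> E y z"
      using indep by simp
    then show "cball (c y) (r y) \<inter> cball (c z) (r z) = {}"
      using adj[rule_format, of y z] nbhd_L \<open>y \<in> L\<close> \<open>z \<in> L\<close> \<open>y \<noteq> z\<close> by auto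
  qed
qed

theorem lemma5p1:
  fixes V :: "'a set" and E :: "'a \<Rightarrow> 'a \<Rightarrow> bool"
  assumes "finite V" and "V \<noteq> {}"
    and "simple_graph V E"
    and "circle_intersection_graph V E"
  shows "\<exists>v\<in>V. \<not> has_induced_K16 ({v} \<union> nbhd V E v) E"
proof -
  obtain c :: "'a \<Rightarrow> real^2" and r :: "'a \<Rightarrow> real" where
    r_pos: "\<forall>v\<in>V. r v > 0" and
    adj: "\<forall>u\<in>V. \<forall>v\<in>V. u \<noteq> v \<longrightarrow> (E u v \<longleftrightarrow> cball (c u) (r u) \<inter> cball (c v) (r v) \<noteq> {})"
    using assms(4) unfolding circle_intersection_graph_def by auto
  define v where "v = arg_min_on r V"
  have "v \<in> V"
    unfolding v_def using assms(1,2) by (rule arg_min_if_finite(1))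
  have r_min: "\<forall>u\<in>V. r v \<le> r u"
    unfolding v_def using assms(1,2) by (auto intro: arg_min_least)
  have "\<not> has_induced_K16 ({v} \<union> nbhd V E v) E"
  proof
    assume "has_induced_K16 ({v} \<union> nbhd V E v) E"
    then obtain L where L: "L \<subseteq> nbhd V E v" "card L = 6"
      and indep: "\<forall>y\<in>L. \<forall>z\<in>L. y \<noteq> z \<longrightarrow> \<not> E y z"
      using induced_K16_in_closed_nbhd_imp_independent_nbhd by metis
    have "finite L"
      by (rule card_ge_0_finite) (simp add: L(2))
    have "card L \<le> 5"
      using card_le_5_if_independent_in_nbhd_of_smallest_disk[OF r_pos adj \<open>v \<in> V\<close> r_min
          \<open>finite L\<close> L(1) indep] .
    then show False
      using L(2) by simp
  qed
  then show ?thesis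
    using \<open>v \<in> V\<close> by blast
qed

end
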